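(* Let $p\in\mathbb{C}[x]$ of degree $n\ge2$ have $k\ge2$ distinct roots, let $\hat z_1,\dots,\hat z_n\in\mathbb{C}$ with $\|p-p_n\prod_j(x-\hat z_j)\|_1\le 2^{-b}\|p\|_1$, and assume $b\ge b_0$, where $b_0$ is the smallest integer that is a power of two, is at least $\max(8n,n\log n)$, and for all $i=1,\dots,k$ satisfies $$2^{-b/(2m_i)}\le\tfrac{1}{2n^2},\quad 2^{-b/(2m_i)}\le\tfrac{\sigma_i}{2n},\quad 2^{-b/2}\le\tfrac{|P_i|}{16(n+1)2^{\tau_p}M(z_i)^n},$$ $$2^{-b/(2m_i)}<\min\Big(\big(\tfrac{\sigma_i}{4n}\big)^8,\tfrac{\sigma_i}{1024n^2}\Big),\quad 2^{-b/8}<\min\Big(\tfrac1{16},\tfrac{|P_i|}{(n+1)2^{2n\Gamma_p+8n}}\Big).$$ Let $Z_i$ denote the set of those $\hat z_j$ lying in $\Delta(z_i,2^{-b/(2m_i)})$. Then for $i\ne j$, $\hat z\in Z_i$ and $\hat z'\in Z_j$, $$|\hat z-\hat z'|\ge 2\big(2^{-b/(16m_i)}+2^{-b/(16m_j)}\big).$$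
   Context: Logarithms base 2; $M(x)=\max(1,|x|)$; $\Delta(z,r)$ closed disk. $p=\sum_ip_ix^i=p_n\prod_{j=1}^k(x-z_j)^{m_j}$ with distinct roots $z_j$, multiplicities $m_j$; $\|p\|_1=\sum|p_i|$; $\tau_p$ smallest non-negative integer with $|p_i|/|p_n|\le 2^{\tau_p}$ for $i<n$; $\Gamma_p:=\max(1,\max_j\log|z_j|)$; $\sigma_i:=\min_{j\ne i}|z_i-z_j|$; $P_i:=\prod_{j\ne i}(z_i-z_j)^{m_j}$. *)

theory Defs
  imports "HOL-Analysis.Analysis" "HOL-Computational_Algebra.Polynomial"
begin

definition roots_of :: "complex poly \<Rightarrow> complex set" where
  "roots_of p = {z. poly p z = 0}"

definition norm1 :: "complex poly \<Rightarrow> real" where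
  "norm1 q = (\<Sum>i\<le>degree q. cmod (coeff q i))"

definition Mfun :: "complex \<Rightarrow> real" where
  "Mfun x = max 1 (cmod x)"

definition tau :: "complex poly \<Rightarrow> nat" where
  "tau p = (LEAST t::nat. \<forall>i<degree p. cmod (coeff p i) / cmod (lead_coeff p) \<le> 2 ^ t)"

text \<open>Gamma_p = max(1, max_j log2 |z_j|); zero roots contribute log 0 = -infinity, hence are omitted.\<close>
definition Gamma :: "complex poly \<Rightarrow> real" where
  "Gamma p = Max (insert 1 {log 2 (cmod z) | z. z \<in> roots_of p \<and> z \<noteq> 0})"

definition sep :: "complex poly \<Rightarrow> complex \<Rightarrow> real" where
  "sep p z = Min {cmod (z - w) | w. w \<in> roots_of p \<and> w \<noteq> z}"

definition Pfac :: "complex poly \<Rightarrow> complex \<Rightarrow> complex" where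
  "Pfac p z = (\<Prod>w\<in>roots_of p - {z}. (z - w) ^ order w p)"

definition b0_cond :: "complex poly \<Rightarrow> nat \<Rightarrow> bool" where
  "b0_cond p b \<longleftrightarrow>
     (let n = degree p in
     (\<exists>e::nat. b = 2 ^ e) \<and>
     real b \<ge> max (8 * real n) (real n * log 2 (real n)) \<and>
     (\<forall>z\<in>roots_of p. let m = real (order z p); \<sigma> = sep p z in
        2 powr (- real b / (2 * m)) \<le> 1 / (2 * real n ^ 2) \<and>
        2 powr (- real b / (2 * m)) \<le> \<sigma> / (2 * real n) \<and>
        2 powr (- real b / 2) \<le> cmod (Pfac p z) /
             (16 * (real n + 1) * 2 ^ tau p * Mfun z ^ n) \<and>
        2 powr (- real b / (2 * m)) < min ((\<sigma> / (4 * real n)) ^ 8) (\<sigma> / (1024 * real n ^ 2)) \<and>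
        2 powr (- real b / 8) < min (1 / 16)
             (cmod (Pfac p z) / ((real n + 1) * 2 powr (2 * real n * Gamma p + 8 * real n)))))"

definition b0 :: "complex poly \<Rightarrow> nat" where
  "b0 p = (LEAST b. b0_cond p b)"

definition Zset :: "complex poly \<Rightarrow> (nat \<Rightarrow> complex) \<Rightarrow> nat \<Rightarrow> complex \<Rightarrow> complex set" where
  "Zset p zh b z = {zh j | j. j \<in> {1..degree p} \<and>
       zh j \<in> cball z (2 powr (- real b / (2 * real (order z p))))}"

end

theory Submission
  imports Defs "HOL-Real_Asymp.Real_Asymp"
begin

text \<open>Each \<open>Z\<^sub>i\<close> lies in the disk of radius
  \<open>r\<^sub>i = 2 powr (-b/(2m\<^sub>i))\<close> around \<open>z\<^sub>i\<close>, and the conditions defining \<open>b\<^sub>0\<close>, which persist for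
  larger \<open>b\<close>, give \<open>r\<^sub>i \<le> \<sigma>\<^sub>i/(2n) \<le> \<sigma>\<^sub>i/4\<close> and, taking eighth roots,
  \<open>2 powr (-b/(16m\<^sub>i)) < \<sigma>\<^sub>i/(4n) \<le> \<sigma>\<^sub>i/8\<close>. Since \<open>\<sigma>\<^sub>i, \<sigma>\<^sub>j \<le> |z\<^sub>i - z\<^sub>j|\<close>, the triangle
  inequality gives \<open>|w - w'| \<ge> |z\<^sub>i - z\<^sub>j|/2\<close>, which beats the claimed bound. The only other point is
  that \<open>b\<^sub>0\<close> exists at all: every condition holds for all large \<open>b\<close>, hence for some power of two.\<close>

lemma two_powr_neg_div_tendsto_0:
  assumes "0 < c"
  shows "((\<lambda>b::nat. 2 powr (- real b / c)) \<longlongrightarrow> 0) sequentially"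
  using assms by real_asymp

lemma eventually_two_powr_neg_div_less:
  assumes "filterlim f at_top F" "0 < c" "0 < K"
  shows "\<forall>\<^sub>F x in F. 2 powr (- real (f x) / c) < K"
  using filterlim_compose[OF two_powr_neg_div_tendsto_0[OF assms(2)] assms(1)] assms(3)
  by (rule order_tendstoD(2))

lemma two_powr_neg_div_antimono:
  assumes "0 < c" "a \<le> b"
  shows "2 powr (- real b / c) \<le> 2 powr (- real a / c)"
  using assms by (intro powr_mono) (auto simp: divide_right_mono)

lemma finite_roots_of: "p \<noteq> 0 \<Longrightarrow> finite (roots_of p)"
  unfolding roots_of_def by (rule poly_roots_finite)

lemma order_ge_1_of_root: "p \<noteq> 0 \<Longrightarrow> z \<in> roots_of p \<Longrightarrow> order z p \<ge> 1"
  using order_root[of p z] unfolding roots_of_def by auto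

lemma sep_le_dist:
  assumes "p \<noteq> 0" "w \<in> roots_of p" "w \<noteq> z"
  shows "sep p z \<le> dist z w"
  unfolding sep_def dist_norm
  using finite_roots_of[OF assms(1)] assms(2,3) by (intro Min_le) auto

lemma sep_pos:
  assumes "p \<noteq> 0" "w \<in> roots_of p" "w \<noteq> z"
  shows "0 < sep p z"
proof -
  have "sep p z \<in> {cmod (z - w) | w. w \<in> roots_of p \<and> w \<noteq> z}"
    unfolding sep_def using finite_roots_of[OF assms(1)] assms(2,3) by (intro Min_in) auto
  then show ?thesis by auto
qed

lemma Pfac_nonzero: "Pfac p z \<noteq> 0"
  unfolding Pfac_def by (cases "finite (roots_of p)") (auto simp: prod_zero_iff)

lemma b0_cond_exists:
  assumes "degree p \<ge> 2" "card (roots_of p) \<ge> 2"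
  shows "\<exists>b. b0_cond p b"
proof -
  let ?n = "real (degree p)"
  have p: "p \<noteq> 0" using assms(1) by auto
  have n: "?n \<ge> 2" using assms(1) by simp
  have sep: "0 < sep p z" if "z \<in> roots_of p" for z
  proof -
    have "\<not> roots_of p \<subseteq> {z}" using card_mono[of "{z}" "roots_of p"] assms(2) by auto
    then obtain w where "w \<in> roots_of p" "w \<noteq> z" by auto
    then show ?thesis using sep_pos[OF p] by blast
  qed
  have pow: "filterlim (\<lambda>e::nat. 2 ^ e :: nat) at_top sequentially"
    by (intro filterlim_subseq) (simp add: strict_mono_def)
  have real_pow: "filterlim (\<lambda>e::nat. real (2 ^ e :: nat)) at_top sequentially"
    by (rule filterlim_compose[OF filterlim_real_sequentially pow])
  note small = eventually_two_powr_neg_div_less[OF pow]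
  have "\<forall>\<^sub>F e in sequentially. b0_cond p (2 ^ e)"
    unfolding b0_cond_def Let_def
  proof (intro eventually_conj eventually_ball_finite[OF finite_roots_of[OF p]] ballI)
    show "\<forall>\<^sub>F e in sequentially. max (8 * ?n) (?n * log 2 ?n) \<le> real (2 ^ e :: nat)"
      by (rule real_pow[unfolded filterlim_at_top, rule_format])
    fix z assume z: "z \<in> roots_of p"
    have P: "0 < cmod (Pfac p z)" using Pfac_nonzero by simp
    have M: "0 < Mfun z" unfolding Mfun_def by simp
    have m: "0 < 2 * real (order z p)" using order_ge_1_of_root[OF p z] by simp
    show "\<forall>\<^sub>F e in sequentially. 2 powr (- real (2 ^ e :: nat) / (2 * real (order z p))) \<le> 1 / (2 * ?n ^ 2)"
      using small[OF m, of "1 / (2 * ?n ^ 2)"] n by (auto elim!: eventually_mono)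
    show "\<forall>\<^sub>F e in sequentially. 2 powr (- real (2 ^ e :: nat) / (2 * real (order z p))) \<le> sep p z / (2 * ?n)"
      using small[OF m, of "sep p z / (2 * ?n)"] sep[OF z] n by (auto elim!: eventually_mono)
    show "\<forall>\<^sub>F e in sequentially. 2 powr (- real (2 ^ e :: nat) / 2) \<le>
            cmod (Pfac p z) / (16 * (?n + 1) * 2 ^ tau p * Mfun z ^ degree p)"
      using small[of 2 "cmod (Pfac p z) / (16 * (?n + 1) * 2 ^ tau p * Mfun z ^ degree p)"] P M
      by (auto elim!: eventually_mono)
    show "\<forall>\<^sub>F e in sequentially. 2 powr (- real (2 ^ e :: nat) / (2 * real (order z p))) <
            min ((sep p z / (4 * ?n)) ^ 8) (sep p z / (1024 * ?n ^ 2))"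
      by (rule small[OF m]) (use sep[OF z] n in simp)
    show "\<forall>\<^sub>F e in sequentially. 2 powr (- real (2 ^ e :: nat) / 8) <
            min (1 / 16) (cmod (Pfac p z) / ((?n + 1) * 2 powr (2 * ?n * Gamma p + 8 * ?n)))"
      by (rule small) (use P in simp_all)
  qed auto
  then show ?thesis by (auto simp: eventually_sequentially)
qed

lemma b0_cond_b0:
  assumes "degree p \<ge> 2" "card (roots_of p) \<ge> 2"
  shows "b0_cond p (b0 p)"
  unfolding b0_def using b0_cond_exists[OF assms] by (rule LeastI_ex)

lemma b0_cond_radius_le_sep:
  assumes "b0_cond p c" "c \<le> b" "degree p \<ge> 2" "z \<in> roots_of p"
  defines "m \<equiv> real (order z p)"
  shows "2 powr (- real b / (2 * m)) \<le> sep p z / 4"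
    and "2 * 2 powr (- real b / (16 * m)) < sep p z / 4"
proof -
  let ?n = "real (degree p)"
  have n: "?n \<ge> 2" using assms(3) by simp
  have "p \<noteq> 0" using assms(3) by auto
  then have "m \<ge> 1" unfolding m_def using assms(4) order_ge_1_of_root[of p z] by auto
  then have mono: "2 powr (- real b / (2 * m)) \<le> 2 powr (- real c / (2 * m))"
    using assms(2) by (intro two_powr_neg_div_antimono) auto
  have c: "2 powr (- real c / (2 * m)) \<le> sep p z / (2 * ?n)"
          "2 powr (- real c / (2 * m)) < (sep p z / (4 * ?n)) ^ 8"
    using assms(1,4) unfolding b0_cond_def Let_def m_def by auto
  have "0 < sep p z / (2 * ?n)" using c(1) powr_gt_zero[of 2 "- real c / (2 * m)"] by linarith
  then have sep: "0 < sep p z" using n by (simp add: zero_less_divide_iff)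
  have "sep p z / (2 * ?n) \<le> sep p z / 4"
    using sep n by (intro divide_left_mono) auto
  then show "2 powr (- real b / (2 * m)) \<le> sep p z / 4"
    using mono c(1) by linarith
  have "(2 powr (- real b / (16 * m))) ^ 8 = 2 powr (- real b / (2 * m))"
    by (simp add: powr_power)
  then have "(2 powr (- real b / (16 * m))) ^ 8 < (sep p z / (4 * ?n)) ^ 8"
    using mono c(2) by linarith
  then have "2 powr (- real b / (16 * m)) < sep p z / (4 * ?n)"
    by (rule power_less_imp_less_base[of _ 8]) (use sep n in auto)
  also have "\<dots> \<le> sep p z / 8"
    using sep n by (intro divide_left_mono) auto
  finally show "2 * 2 powr (- real b / (16 * m)) < sep p z / 4" by simp
qed

lemma dist_ge_half_of_close_centres:
  fixes x y u v :: "'a::metric_space"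
  assumes "dist x u \<le> r" "dist y v \<le> s" "r \<le> dist x y / 4" "s \<le> dist x y / 4"
  shows "dist x y / 2 \<le> dist u v"
proof -
  have "dist x y \<le> dist x u + dist u v + dist y v"
    using dist_triangle[of x y u] dist_triangle[of u y v] dist_commute[of v y] by linarith
  then show ?thesis using assms by linarith
qed

theorem lemma9:
  fixes p :: "complex poly" and zh :: "nat \<Rightarrow> complex" and b :: nat
  assumes "degree p \<ge> 2"
    and "card (roots_of p) \<ge> 2"
    and "norm1 (p - smult (lead_coeff p) (\<Prod>j\<in>{1..degree p}. [:- zh j, 1:]))
           \<le> 2 powr (- real b) * norm1 p"
    and "b \<ge> b0 p"
    and "zi \<in> roots_of p" and "zj \<in> roots_of p" and "zi \<noteq> zj"
    and "w \<in> Zset p zh b zi" and "w' \<in> Zset p zh b zj"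
  shows "cmod (w - w') \<ge> 2 * (2 powr (- real b / (16 * real (order zi p)))
                               + 2 powr (- real b / (16 * real (order zj p))))"
proof -
  have p: "p \<noteq> 0" using assms(1) by auto
  note radius = b0_cond_radius_le_sep[OF b0_cond_b0[OF assms(1,2)] assms(4,1)]
  have "sep p zj \<le> dist zj zi"
    using sep_le_dist[OF p assms(5), of zj] assms(7) by blast
  then have sep: "sep p zi \<le> dist zi zj" "sep p zj \<le> dist zi zj"
    using sep_le_dist[OF p assms(6), of zi] assms(7) by (simp_all only: dist_commute)
  have "dist zi w \<le> 2 powr (- real b / (2 * real (order zi p)))"
       "dist zj w' \<le> 2 powr (- real b / (2 * real (order zj p)))"
    using assms(8,9) unfolding Zset_def by auto
  then have far: "dist zi zj / 2 \<le> dist w w'"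
    using radius(1)[OF assms(5)] radius(1)[OF assms(6)] sep
    by (intro dist_ge_half_of_close_centres) auto
  have "2 * (2 powr (- real b / (16 * real (order zi p)))
             + 2 powr (- real b / (16 * real (order zj p)))) < dist zi zj / 2"
    using radius(2)[OF assms(5)] radius(2)[OF assms(6)] sep by (simp only: distrib_left)
  also note far
  finally show ?thesis unfolding dist_norm by (rule less_imp_le)
qed

end
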